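(* Let $(X,f)$ be a dynamical system and let $S\subset X$ be an uncountable syndetically scrambled set for $f$ such that for every nonempty open $U\subset X$ there is $n\in\mathbb N$ with $f^n(S)\subset f^n(U)$. Then $f$ has a c-dense syndetically scrambled set $T$. If $S$ is moreover a Cantor set, then $T$ can be chosen to be a dense Mycielski set. Moreover, if $S$ is syndetically $\varepsilon$-scrambled, then $T$ is syndetically $\varepsilon$-scrambled.
   Context: Dynamical system: compact metric space $X$ with metric $d$ and continuous $f$. $T\subset X$ is c-dense if $T\cap U$ is uncountable for every nonempty open $U$. Syndetic: subset of $\mathbb N$ meeting every set with arbitrarily long runs of consecutive integers. $\mathrm{Asy}(f)=\{(x,y):d(f^nx,f^ny)\to0\}$, $\mathrm{SProx}(f)=\{(x,y):\{n:d(f^nx,f^ny)<\eta\}$ syndetic for all $\eta>0\}$. A syndetically scrambled set has at least two points and all distinct pairs in $\mathrm{SProx}(f)\setminus\mathrm{Asy}(f)$; it is syndetically $\varepsilon$-scrambled if also $\limsup_n d(f^nx,f^ny)\ge\varepsilon$ for all distinct $x,y$ in it. Cantor set: nonempty compact perfect totally disconnected; Mycielski set: countable union of Cantor sets. *)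

theory Defs
  imports "HOL-Analysis.Analysis"
begin

definition thick :: "nat set \<Rightarrow> bool" where
  "thick B \<longleftrightarrow> (\<forall>k. \<exists>m. {m..<m+k} \<subseteq> B)"

definition syndetic :: "nat set \<Rightarrow> bool" where
  "syndetic A \<longleftrightarrow> (\<forall>B. thick B \<longrightarrow> A \<inter> B \<noteq> {})"

definition Asy :: "'a::metric_space set \<Rightarrow> ('a \<Rightarrow> 'a) \<Rightarrow> ('a \<times> 'a) set" where
  "Asy X f = {(x, y). x \<in> X \<and> y \<in> X \<and>
      (\<lambda>n. dist ((f ^^ n) x) ((f ^^ n) y)) \<longlonglongrightarrow> 0}"

definition SProx :: "'a::metric_space set \<Rightarrow> ('a \<Rightarrow> 'a) \<Rightarrow> ('a \<times> 'a) set" where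
  "SProx X f = {(x, y). x \<in> X \<and> y \<in> X \<and>
      (\<forall>\<eta>>0. syndetic {n. dist ((f ^^ n) x) ((f ^^ n) y) < \<eta>})}"

definition synd_scrambled :: "'a::metric_space set \<Rightarrow> ('a \<Rightarrow> 'a) \<Rightarrow> 'a set \<Rightarrow> bool" where
  "synd_scrambled X f S \<longleftrightarrow> S \<subseteq> X \<and> (\<exists>x\<in>S. \<exists>y\<in>S. x \<noteq> y) \<and>
     (\<forall>x\<in>S. \<forall>y\<in>S. x \<noteq> y \<longrightarrow> (x, y) \<in> SProx X f - Asy X f)"

definition synd_eps_scrambled :: "'a::metric_space set \<Rightarrow> ('a \<Rightarrow> 'a) \<Rightarrow> real \<Rightarrow> 'a set \<Rightarrow> bool" where
  "synd_eps_scrambled X f \<epsilon> S \<longleftrightarrow> synd_scrambled X f S \<and>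
     (\<forall>x\<in>S. \<forall>y\<in>S. x \<noteq> y \<longrightarrow>
        limsup (\<lambda>n. ereal (dist ((f ^^ n) x) ((f ^^ n) y))) \<ge> ereal \<epsilon>)"

definition c_dense :: "'a::metric_space set \<Rightarrow> 'a set \<Rightarrow> bool" where
  "c_dense X T \<longleftrightarrow> T \<subseteq> X \<and> (\<forall>U. openin (top_of_set X) U \<and> U \<noteq> {} \<longrightarrow> uncountable (T \<inter> U))"

definition totally_disconnected_set :: "'a::topological_space set \<Rightarrow> bool" where
  "totally_disconnected_set C \<longleftrightarrow> (\<forall>K. K \<subseteq> C \<and> connected K \<longrightarrow> (\<forall>x\<in>K. \<forall>y\<in>K. x = y))"

definition cantor_set :: "'a::metric_space set \<Rightarrow> bool" where
  "cantor_set C \<longleftrightarrow> C \<noteq> {} \<and> compact C \<and> (\<forall>x\<in>C. x islimpt C) \<and> totally_disconnected_set C"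

definition mycielski_set :: "'a::metric_space set \<Rightarrow> bool" where
  "mycielski_set M \<longleftrightarrow> (\<exists>\<C>. countable \<C> \<and> (\<forall>C\<in>\<C>. cantor_set C) \<and> M = \<Union>\<C>)"

end

theory Submission
  imports Defs
begin

(* Fix compact sets W k with nonempty interior such that every nonempty open set contains one of
  them, and times n k with f^(n k) S contained in f^(n k) (W k). Split S into pairwise disjoint
  uncountable pieces P k and choose uncountable Q k inside W k on which f^(n k) is injective and
  whose image lies in f^(n k) (P k). Then every point of T = (UN k. Q k) eventually shares its orbit
  with a point of S, distinct points of T with distinct points of S; since syndetic proximality,
  asymptoticity and the limsup of distances only depend on tails of orbits, T inherits
  scrambledness from S, and it is c-dense because every Q k is uncountable. If S is a Cantor set,
  the pieces P k can be taken compact, and then Q k can be taken to be a Cantor set: it is cut out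
  of the compact set of points of W k that f^(n k) maps into f^(n k) (P k) by a Cantor scheme whose
  pieces have disjoint uncountable images under f^(n k). *)

section \<open>Orbits that eventually coincide\<close>

definition eventually_coincide :: "('a \<Rightarrow> 'a) \<Rightarrow> 'a \<Rightarrow> 'a \<Rightarrow> bool" where
  "eventually_coincide f x y \<longleftrightarrow> (\<exists>N. (f ^^ N) x = (f ^^ N) y)"

lemma funpow_eq_mono:
  fixes f :: "'a \<Rightarrow> 'a"
  assumes "(f ^^ N) x = (f ^^ N) y" "N \<le> n"
  shows "(f ^^ n) x = (f ^^ n) y"
proof -
  have "f ^^ n = (f ^^ (n - N)) \<circ> (f ^^ N)"
    using assms(2) by (metis funpow_add le_add_diff_inverse2)
  then show ?thesis using assms(1) by simp
qed

lemma eventually_coincide_imp_eventually: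
  "eventually_coincide f x y \<Longrightarrow> eventually (\<lambda>n. (f ^^ n) x = (f ^^ n) y) sequentially"
  unfolding eventually_coincide_def eventually_sequentially by (metis funpow_eq_mono)

lemma eventually_coincide_imp_eventually_dist:
  assumes "eventually_coincide f x s" "eventually_coincide f y t"
  shows "eventually (\<lambda>n. dist ((f ^^ n) x) ((f ^^ n) y) = dist ((f ^^ n) s) ((f ^^ n) t)) sequentially"
  using eventually_conj[OF assms[THEN eventually_coincide_imp_eventually]]
  by (rule eventually_mono) simp

lemma thick_Int_atLeast:
  assumes "thick B"
  shows "thick (B \<inter> {N..})"
  unfolding thick_def
proof
  fix k
  obtain m where "{m..<m + (k + N)} \<subseteq> B" using assms unfolding thick_def by blast
  then show "\<exists>m. {m..<m + k} \<subseteq> B \<inter> {N..}" by (intro exI[of _ "m + N"]) auto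
qed

lemma syndetic_eventually_mono:
  assumes "syndetic A" "\<And>n. n \<ge> N \<Longrightarrow> n \<in> A \<Longrightarrow> n \<in> A'"
  shows "syndetic A'"
  unfolding syndetic_def
proof (intro allI impI)
  fix B assume "thick B"
  then have "A \<inter> (B \<inter> {N..}) \<noteq> {}"
    using assms(1) thick_Int_atLeast unfolding syndetic_def by blast
  then show "A' \<inter> B \<noteq> {}" using assms(2) by auto
qed

lemma SProx_Diff_Asy_transfer:
  assumes st: "(s, t) \<in> SProx X f - Asy X f" and x: "x \<in> X" "y \<in> X"
    and co: "eventually_coincide f x s" "eventually_coincide f y t"
  shows "(x, y) \<in> SProx X f - Asy X f"
proof -
  have ev: "eventually (\<lambda>n. dist ((f ^^ n) x) ((f ^^ n) y) = dist ((f ^^ n) s) ((f ^^ n) t)) sequentially"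
    using co by (rule eventually_coincide_imp_eventually_dist)
  then obtain N where N: "\<And>n. n \<ge> N \<Longrightarrow> dist ((f ^^ n) x) ((f ^^ n) y) = dist ((f ^^ n) s) ((f ^^ n) t)"
    unfolding eventually_sequentially by blast
  have "syndetic {n. dist ((f ^^ n) x) ((f ^^ n) y) < \<eta>}" if "\<eta> > 0" for \<eta>
  proof (rule syndetic_eventually_mono[where N = N])
    show "syndetic {n. dist ((f ^^ n) s) ((f ^^ n) t) < \<eta>}" using st that unfolding SProx_def by blast
  qed (simp add: N)
  then have "(x, y) \<in> SProx X f" using x unfolding SProx_def by blast
  moreover have "(x, y) \<notin> Asy X f"
  proof
    assume "(x, y) \<in> Asy X f"
    then have "(\<lambda>n. dist ((f ^^ n) x) ((f ^^ n) y)) \<longlonglongrightarrow> 0" unfolding Asy_def by blast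
    then have "(\<lambda>n. dist ((f ^^ n) s) ((f ^^ n) t)) \<longlonglongrightarrow> 0"
      by (rule Lim_transform_eventually) (use ev in \<open>auto elim: eventually_mono\<close>)
    then show False using st unfolding Asy_def SProx_def by blast
  qed
  ultimately show ?thesis by blast
qed

lemma limsup_dist_transfer:
  assumes "eventually_coincide f x s" "eventually_coincide f y t"
  shows "limsup (\<lambda>n. ereal (dist ((f ^^ n) x) ((f ^^ n) y))) =
         limsup (\<lambda>n. ereal (dist ((f ^^ n) s) ((f ^^ n) t)))"
  using eventually_coincide_imp_eventually_dist[OF assms]
  by (rule Limsup_eq[OF eventually_mono]) simp

lemma synd_scrambled_eventually_coincide_eq:
  assumes "synd_scrambled X f S" "s \<in> S" "t \<in> S" "eventually_coincide f s t"
  shows "s = t"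
proof (rule ccontr)
  assume "s \<noteq> t"
  have "eventually (\<lambda>n. dist ((f ^^ n) s) ((f ^^ n) t) = 0) sequentially"
    using eventually_coincide_imp_eventually[OF assms(4)] by (rule eventually_mono) simp
  then have "(\<lambda>n. dist ((f ^^ n) s) ((f ^^ n) t)) \<longlonglongrightarrow> 0"
    by (rule tendsto_eventually)
  then show False using assms \<open>s \<noteq> t\<close> unfolding synd_scrambled_def Asy_def by blast
qed

lemma synd_scrambled_inj_on_funpow:
  assumes "synd_scrambled X f S"
  shows "inj_on (f ^^ n) S"
  using synd_scrambled_eventually_coincide_eq[OF assms]
  by (auto intro: inj_onI simp: eventually_coincide_def)

lemma synd_scrambled_transfer:
  assumes S: "synd_scrambled X f S" and T: "T \<subseteq> X" "x \<in> T" "y \<in> T" "x \<noteq> y"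
    and \<tau>: "inj_on \<tau> T" "\<tau> ` T \<subseteq> S" "\<And>z. z \<in> T \<Longrightarrow> eventually_coincide f z (\<tau> z)"
  shows "synd_scrambled X f T"
  unfolding synd_scrambled_def
proof (intro conjI ballI impI)
  fix u v assume uv: "u \<in> T" "v \<in> T" "u \<noteq> v"
  moreover have "\<tau> u \<noteq> \<tau> v" "\<tau> u \<in> S" "\<tau> v \<in> S" using inj_on_contraD[OF \<tau>(1) uv(3,1,2)] \<tau>(2) uv by auto
  ultimately have "(\<tau> u, \<tau> v) \<in> SProx X f - Asy X f"
    using S unfolding synd_scrambled_def by blast
  then show "(u, v) \<in> SProx X f - Asy X f"
    using SProx_Diff_Asy_transfer uv T(1) \<tau>(3) by blast
qed (use T in auto)

lemma synd_eps_scrambled_transfer: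
  assumes S: "synd_eps_scrambled X f \<epsilon> S" and T: "synd_scrambled X f T"
    and \<tau>: "inj_on \<tau> T" "\<tau> ` T \<subseteq> S" "\<And>z. z \<in> T \<Longrightarrow> eventually_coincide f z (\<tau> z)"
  shows "synd_eps_scrambled X f \<epsilon> T"
  unfolding synd_eps_scrambled_def
proof (intro conjI ballI impI T)
  fix u v assume uv: "u \<in> T" "v \<in> T" "u \<noteq> v"
  moreover have "\<tau> u \<noteq> \<tau> v" "\<tau> u \<in> S" "\<tau> v \<in> S" using inj_on_contraD[OF \<tau>(1) uv(3,1,2)] \<tau>(2) uv by auto
  ultimately have "ereal \<epsilon> \<le> limsup (\<lambda>n. ereal (dist ((f ^^ n) (\<tau> u)) ((f ^^ n) (\<tau> v))))"
    using S unfolding synd_eps_scrambled_def by blast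
  then show "ereal \<epsilon> \<le> limsup (\<lambda>n. ereal (dist ((f ^^ n) u) ((f ^^ n) v)))"
    using limsup_dist_transfer[OF \<tau>(3) \<tau>(3), OF uv(1,2)] by simp
qed

section \<open>Uncountable pieces matched by eventually coinciding orbits\<close>

lemma uncountable_disjoint_family:
  assumes "uncountable S"
  obtains P :: "nat \<Rightarrow> 'a set" where "\<And>k. P k \<subseteq> S" "\<And>k. uncountable (P k)" "disjoint_family P"
proof -
  have inf: "infinite S" using assms uncountable_infinite by blast
  then obtain g where g: "bij_betw g (S \<times> S) S"
    using card_of_ordIso[THEN iffD2, OF card_of_Times_same_infinite[OF inf]] by blast
  obtain e :: "nat \<Rightarrow> 'a" where e: "inj e" "range e \<subseteq> S"
    using infinite_countable_subset[OF inf] by blast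
  define P where "P k = g ` (S \<times> {e k})" for k
  have inj: "inj_on g (S \<times> {e k})" for k
    using bij_betw_imp_inj_on[OF g] by (rule inj_on_subset) (use e in auto)
  show ?thesis
  proof
    show "P k \<subseteq> S" for k
      using g e(2) unfolding P_def bij_betw_def by blast
    have "uncountable (S \<times> {e k})" for k
    proof
      assume "countable (S \<times> {e k})"
      then have "countable (fst ` (S \<times> {e k}))" by (rule countable_image)
      then show False using assms by simp
    qed
    then show "uncountable (P k)" for k
      unfolding P_def using countable_image_inj_on inj by blast
    show "disjoint_family P"
      unfolding disjoint_family_on_def
    proof (intro ballI impI)
      fix k j :: nat assume "k \<noteq> j"
      then have "(S \<times> {e k}) \<inter> (S \<times> {e j}) = {}" using e(1) by (auto dest: injD)
      moreover have "g ` (S \<times> {e k} \<inter> S \<times> {e j}) = P k \<inter> P j"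
        unfolding P_def by (rule inj_on_image_Int[OF bij_betw_imp_inj_on[OF g]]) (use e(2) in auto)
      ultimately show "P k \<inter> P j = {}" by simp
    qed
  qed
qed

lemma uncountable_section:
  assumes P: "uncountable P" "inj_on g P" and W: "g ` P \<subseteq> g ` W"
  obtains Q where "Q \<subseteq> W" "inj_on g Q" "uncountable Q" "g ` Q = g ` P"
proof -
  let ?Q = "inv_into W g ` g ` P"
  have sub: "?Q \<subseteq> W" using W by (blast intro: inv_into_into)
  have "g (inv_into W g y) = y" if "y \<in> g ` P" for y
    using W that by (blast intro: f_inv_into_f)
  then have inj: "inj_on g ?Q" by (force intro: inj_onI)
  have "g (inv_into W g (g x)) = g x" if "x \<in> P" for x
    using W that by (blast intro: f_inv_into_f)
  then have image: "g ` ?Q = g ` P" by (simp add: image_image cong: image_cong)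
  have "countable P" if "countable ?Q"
  proof -
    have "countable (g ` P)" using countable_image[OF that, of g] unfolding image .
    then show ?thesis using P(2) by (rule countable_image_inj_on)
  qed
  then have "uncountable ?Q" using P(1) by blast
  with sub inj image show ?thesis by (intro that)
qed

lemma disjoint_family_matching_map:
  assumes P: "disjoint_family P" and g: "\<And>k. inj_on (g k) (Q k)" "\<And>k. g k ` Q k \<subseteq> g k ` P k"
  obtains \<tau> where "inj_on \<tau> (\<Union>k. Q k)"
    "\<And>x. x \<in> (\<Union>k. Q k) \<Longrightarrow> \<exists>k. x \<in> Q k \<and> \<tau> x \<in> P k \<and> g k (\<tau> x) = g k x"
proof
  define \<tau> where "\<tau> x = (SOME t. \<exists>k. x \<in> Q k \<and> t \<in> P k \<and> g k t = g k x)" for x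
  show \<tau>: "\<exists>k. x \<in> Q k \<and> \<tau> x \<in> P k \<and> g k (\<tau> x) = g k x" if x: "x \<in> (\<Union>k. Q k)" for x
  proof -
    obtain k where k: "x \<in> Q k" using x by blast
    then have "g k x \<in> g k ` P k" using g(2) by blast
    then obtain t where "t \<in> P k" "g k t = g k x" by (metis imageE)
    then have "\<exists>t k. x \<in> Q k \<and> t \<in> P k \<and> g k t = g k x" using k by blast
    then show ?thesis unfolding \<tau>_def by (rule someI_ex)
  qed
  show "inj_on \<tau> (\<Union>k. Q k)"
  proof (rule inj_onI)
    fix x y assume xy: "x \<in> (\<Union>k. Q k)" "y \<in> (\<Union>k. Q k)" "\<tau> x = \<tau> y"
    obtain k where k: "x \<in> Q k" "\<tau> x \<in> P k" "g k (\<tau> x) = g k x" using \<tau>[OF xy(1)] by blast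
    obtain j where j: "y \<in> Q j" "\<tau> y \<in> P j" "g j (\<tau> y) = g j y" using \<tau>[OF xy(2)] by blast
    have "k = j"
    proof (rule ccontr)
      assume "k \<noteq> j"
      then have "P k \<inter> P j = {}" using disjoint_family_onD[OF P] by blast
      then show False using k(2) j(2) xy(3) by auto
    qed
    then have "g k x = g k y" using k(3) j(3) xy(3) by simp
    then show "x = y" using inj_onD[OF g(1)[of k]] k(1) j(1) \<open>k = j\<close> by blast
  qed
qed

lemma c_dense_imp_subset_closure:
  assumes "c_dense X T"
  shows "X \<subseteq> closure T"
proof
  fix x assume x: "x \<in> X"
  show "x \<in> closure T" unfolding closure_approachable
  proof (intro allI impI)
    fix e :: real assume "e > 0"
    moreover have "openin (top_of_set X) (X \<inter> ball x e)" by (simp add: openin_open_Int)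
    ultimately have "uncountable (T \<inter> (X \<inter> ball x e))"
      using assms x unfolding c_dense_def by (metis centre_in_ball empty_iff IntI)
    then obtain y where "y \<in> T" "y \<in> ball x e" by (metis IntE countable_empty equals0I)
    then show "\<exists>y\<in>T. dist y x < e" by (auto simp: dist_commute)
  qed
qed

lemma c_dense_synd_scrambled_Union:
  fixes n :: "nat \<Rightarrow> nat"
  assumes S: "synd_scrambled X f S" and P: "\<And>k. P k \<subseteq> S" "disjoint_family P"
    and Q: "\<And>k. Q k \<subseteq> X" "\<And>k. uncountable (Q k)"
      "\<And>k. inj_on (f ^^ n k) (Q k)" "\<And>k. (f ^^ n k) ` Q k \<subseteq> (f ^^ n k) ` P k"
    and dense: "\<And>U. openin (top_of_set X) U \<Longrightarrow> U \<noteq> {} \<Longrightarrow> \<exists>k. Q k \<subseteq> U"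
  shows "c_dense X (\<Union>k. Q k) \<and> synd_scrambled X f (\<Union>k. Q k) \<and>
    (\<forall>\<epsilon>. synd_eps_scrambled X f \<epsilon> S \<longrightarrow> synd_eps_scrambled X f \<epsilon> (\<Union>k. Q k))"
proof -
  let ?T = "\<Union>k. Q k"
  obtain \<tau> where \<tau>: "inj_on \<tau> ?T"
    and \<tau>_match: "\<And>x. x \<in> ?T \<Longrightarrow> \<exists>k. x \<in> Q k \<and> \<tau> x \<in> P k \<and> (f ^^ n k) (\<tau> x) = (f ^^ n k) x"
    using disjoint_family_matching_map[OF P(2) Q(3,4)] by blast
  have \<tau>S: "\<tau> ` ?T \<subseteq> S"
  proof
    fix s assume "s \<in> \<tau> ` ?T"
    then obtain x where "x \<in> ?T" "s = \<tau> x" by blast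
    then show "s \<in> S" using \<tau>_match P(1) by blast
  qed
  have \<tau>_co: "eventually_coincide f x (\<tau> x)" if x: "x \<in> ?T" for x
  proof -
    obtain k where "(f ^^ n k) (\<tau> x) = (f ^^ n k) x" using \<tau>_match[OF x] by blast
    then show ?thesis unfolding eventually_coincide_def by (metis exI)
  qed
  have "uncountable (?T \<inter> U)" if U: "openin (top_of_set X) U" "U \<noteq> {}" for U
  proof -
    obtain k where "Q k \<subseteq> U" using dense[OF U] by blast
    then have "Q k \<subseteq> ?T \<inter> U" by blast
    then show ?thesis using Q(2)[of k] countable_subset by blast
  qed
  moreover have TX: "?T \<subseteq> X" using Q(1) by blast
  ultimately have "c_dense X ?T" unfolding c_dense_def by blast
  have "Q 0 \<noteq> {}" using Q(2)[of 0] by auto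
  then obtain x where x: "x \<in> Q 0" by blast
  have "Q 0 - {x} \<noteq> {}"
    using uncountable_minus_countable[OF Q(2)[of 0], of "{x}"] countable_empty by force
  then obtain y where y: "y \<in> Q 0" "y \<noteq> x" by blast
  have T: "synd_scrambled X f ?T"
    by (rule synd_scrambled_transfer[OF S TX _ _ _ \<tau> \<tau>S \<tau>_co]) (use x y in auto)
  have "synd_eps_scrambled X f \<epsilon> ?T" if "synd_eps_scrambled X f \<epsilon> S" for \<epsilon>
    by (rule synd_eps_scrambled_transfer[OF that T \<tau> \<tau>S \<tau>_co])
  then show ?thesis using \<open>c_dense X ?T\<close> T by blast
qed

section \<open>A Cantor scheme with separated images\<close>

lemma countable_image_if_locally_countable:
  fixes A :: "'a::metric_space set"
  assumes A: "compact A" and loc: "\<And>x. x \<in> A \<Longrightarrow> \<exists>e>0. countable (g ` (A \<inter> ball x e))"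
  shows "countable (g ` A)"
proof -
  obtain e where e: "\<And>x. x \<in> A \<Longrightarrow> e x > 0 \<and> countable (g ` (A \<inter> ball x (e x)))"
    using loc by metis
  have "A \<subseteq> (\<Union>x\<in>A. ball x (e x))" using e by force
  then obtain F where F: "F \<subseteq> A" "finite F" "A \<subseteq> (\<Union>x\<in>F. ball x (e x))"
    using compactE_image[OF A, of A "\<lambda>x. ball x (e x)"] by auto
  have "g ` A \<subseteq> (\<Union>x\<in>F. g ` (A \<inter> ball x (e x)))" using F(3) by blast
  moreover have "countable (\<Union>x\<in>F. g ` (A \<inter> ball x (e x)))"
    by (rule countable_UN[OF countable_finite[OF F(2)]]) (use F(1) e in blast)
  ultimately show ?thesis by (rule countable_subset)
qed

lemma condensation_point_exists:
  fixes Y :: "'a::metric_space set"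
  assumes "compact Y" "uncountable Y"
  obtains y where "y \<in> Y" "\<And>e. e > 0 \<Longrightarrow> uncountable (Y \<inter> ball y e)"
proof -
  have "\<exists>y\<in>Y. \<forall>e>0. uncountable (Y \<inter> ball y e)"
  proof (rule ccontr)
    assume "\<not> (\<exists>y\<in>Y. \<forall>e>0. uncountable (Y \<inter> ball y e))"
    then have "countable (id ` Y)"
      by (intro countable_image_if_locally_countable[OF assms(1)]) auto
    then show False using assms(2) by simp
  qed
  then show ?thesis using that by blast
qed

lemma uncountable_image_small_compact_subset:
  fixes A :: "'a::metric_space set"
  assumes A: "compact A" "uncountable (\<phi> ` A)" and e: "e > 0"
  obtains B c where "compact B" "B \<subseteq> A" "uncountable (\<phi> ` B)" "B \<subseteq> cball c e"
proof -
  have "\<exists>c. uncountable (\<phi> ` (A \<inter> cball c e))"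
  proof (rule ccontr)
    assume "\<nexists>c. uncountable (\<phi> ` (A \<inter> cball c e))"
    then have "countable (\<phi> ` (A \<inter> ball x e))" if "x \<in> A" for x
      by (metis Int_mono ball_subset_cball countable_subset image_mono order_refl)
    then have "countable (\<phi> ` A)"
      using e by (intro countable_image_if_locally_countable[OF A(1)]) blast
    then show False using A(2) by blast
  qed
  then obtain c where "uncountable (\<phi> ` (A \<inter> cball c e))" by blast
  moreover have "compact (A \<inter> cball c e)" using A(1) by (simp add: compact_Int_closed)
  ultimately show ?thesis using that by blast
qed

definition separated_split :: "('a::metric_space \<Rightarrow> 'b) \<Rightarrow> 'a set \<Rightarrow> real \<Rightarrow> 'a set \<Rightarrow> 'a set \<Rightarrow> bool" where
  "separated_split \<phi> A e A0 A1 \<longleftrightarrow>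
     compact A0 \<and> compact A1 \<and> A0 \<subseteq> A \<and> A1 \<subseteq> A \<and>
     uncountable (\<phi> ` A0) \<and> uncountable (\<phi> ` A1) \<and> \<phi> ` A0 \<inter> \<phi> ` A1 = {} \<and>
     (\<exists>c. A0 \<subseteq> cball c e) \<and> (\<exists>c. A1 \<subseteq> cball c e)"

lemma uncountable_ball_and_outside:
  fixes Y :: "'a::metric_space set"
  assumes Y: "compact Y" "uncountable Y"
  shows "\<exists>y r. r > 0 \<and> uncountable (Y \<inter> ball y (r / 2)) \<and> uncountable (Y - ball y r)"
proof -
  obtain y where y: "y \<in> Y" "\<And>r. r > 0 \<Longrightarrow> uncountable (Y \<inter> ball y r)"
    using condensation_point_exists[OF Y] by blast
  have cover: "Y - {y} \<subseteq> (\<Union>m. Y - ball y (inverse (real (Suc m))))"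
  proof
    fix z assume z: "z \<in> Y - {y}"
    then obtain m where m: "inverse (real (Suc m)) < dist y z"
      using reals_Archimedean[of "dist y z"] by auto
    have "z \<in> Y - ball y (inverse (real (Suc m)))" using z m by simp
    then show "z \<in> (\<Union>m. Y - ball y (inverse (real (Suc m))))" by blast
  qed
  have "\<exists>m. uncountable (Y - ball y (inverse (real (Suc m))))"
  proof (rule ccontr)
    assume "\<nexists>m. uncountable (Y - ball y (inverse (real (Suc m))))"
    then have "countable (\<Union>m. Y - ball y (inverse (real (Suc m))))"
      by (intro countable_UN[OF countableI_type]) blast
    then have "countable (Y - {y})" by (rule countable_subset[OF cover])
    then show False using uncountable_minus_countable[OF Y(2)] by blast
  qed
  then obtain m where m: "uncountable (Y - ball y (inverse (real (Suc m))))" by blast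
  have "inverse (real (Suc m)) > 0" by simp
  moreover have "uncountable (Y \<inter> ball y (inverse (real (Suc m)) / 2))" using y(2) by simp
  ultimately show ?thesis using m by blast
qed

lemma separated_split_exists:
  fixes \<phi> :: "'a::metric_space \<Rightarrow> 'b::metric_space"
  assumes A: "compact A" "continuous_on A \<phi>" "uncountable (\<phi> ` A)" and e: "e > 0"
  shows "\<exists>A0 A1. separated_split \<phi> A e A0 A1"
proof -
  obtain r y where r: "r > 0" and y: "uncountable (\<phi> ` A \<inter> ball y (r / 2))"
    and m: "uncountable (\<phi> ` A - ball y r)"
    using uncountable_ball_and_outside[OF compact_continuous_image[OF A(2,1)] A(3)] by blast
  define A0 where "A0 = A \<inter> \<phi> -` cball y (r / 2)"
  define A1 where "A1 = A \<inter> \<phi> -` (- ball y r)"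
  have "closed A0" "closed A1"
    unfolding A0_def A1_def using A(1,2)
    by (simp_all add: continuous_closed_preimage compact_imp_closed closed_Compl)
  moreover have "A \<inter> A0 = A0" "A \<inter> A1 = A1" unfolding A0_def A1_def by blast+
  ultimately have cpt: "compact A0" "compact A1"
    using compact_Int_closed[OF A(1)] by metis+
  have "\<phi> ` A \<inter> ball y (r / 2) \<subseteq> \<phi> ` A0" unfolding A0_def by auto
  then have "uncountable (\<phi> ` A0)" using y countable_subset by blast
  then obtain B0 c0 where B0: "compact B0" "B0 \<subseteq> A0" "uncountable (\<phi> ` B0)" "B0 \<subseteq> cball c0 e"
    using uncountable_image_small_compact_subset[OF cpt(1) _ e] by blast
  have "\<phi> ` A1 = \<phi> ` A - ball y r" unfolding A1_def by blast
  then have "uncountable (\<phi> ` A1)" using m by simp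
  then obtain B1 c1 where B1: "compact B1" "B1 \<subseteq> A1" "uncountable (\<phi> ` B1)" "B1 \<subseteq> cball c1 e"
    using uncountable_image_small_compact_subset[OF cpt(2) _ e] by blast
  have "\<phi> ` A0 \<inter> \<phi> ` A1 = {}" unfolding A0_def A1_def using r by auto
  then have "\<phi> ` B0 \<inter> \<phi> ` B1 = {}" using B0(2) B1(2) by blast
  moreover have "B0 \<subseteq> A" "B1 \<subseteq> A" using B0(2) B1(2) unfolding A0_def A1_def by auto
  ultimately have "separated_split \<phi> A e B0 B1"
    unfolding separated_split_def using B0 B1 by blast
  then show ?thesis by blast
qed

lemma compact_decseq_Inter_nonempty:
  fixes F :: "nat \<Rightarrow> 'a::metric_space set"
  assumes F: "\<And>n. compact (F n)" "\<And>n. F n \<noteq> {}" "\<And>n. F (Suc n) \<subseteq> F n"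
  shows "\<exists>x. \<forall>n. x \<in> F n"
proof -
  have dec: "F n \<subseteq> F m" if "m \<le> n" for m n
    using lift_Suc_antimono_le[of F, OF F(3) that] .
  have "F 0 \<inter> \<Inter>(range F) \<noteq> {}"
  proof (rule compact_imp_fip[OF F(1)])
    show "closed T" if "T \<in> range F" for T using that F(1) compact_imp_closed by blast
  next
    fix G assume G: "finite G" "G \<subseteq> range F"
    then obtain I where I: "finite I" "G = F ` I" using finite_subset_image[OF G] by blast
    define N where "N = Max (insert 0 I)"
    have "F N \<subseteq> F i" if "i \<in> insert 0 I" for i
      using dec[of i N] that I(1) unfolding N_def by simp
    then have "F N \<subseteq> F 0 \<inter> \<Inter>G" unfolding I(2) by blast
    then show "F 0 \<inter> \<Inter>G \<noteq> {}" using F(2)[of N] by blast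
  qed
  then show ?thesis by blast
qed

lemma uncountable_UNIV_nat_bool_fun: "uncountable (UNIV :: (nat \<Rightarrow> bool) set)"
proof
  assume "countable (UNIV :: (nat \<Rightarrow> bool) set)"
  then obtain g :: "(nat \<Rightarrow> bool) \<Rightarrow> nat" where "inj g" unfolding countable_def by blast
  define d where "d n = (\<not> inv g n n)" for n
  have "inv g (g d) = d" using \<open>inj g\<close> by simp
  then have "d (g d) = inv g (g d) (g d)" by simp
  then show False unfolding d_def by simp
qed

lemma finite_bool_lists_length: "finite {s :: bool list. length s = n}"
  using finite_lists_length_eq[of "UNIV :: bool set" n] by simp

definition cantor_split :: "('a::metric_space \<Rightarrow> 'b) \<Rightarrow> 'a set \<Rightarrow> real \<Rightarrow> 'a set \<times> 'a set" where
  "cantor_split \<phi> A e = (SOME p. separated_split \<phi> A e (fst p) (snd p))"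

lemma separated_split_cantor_split:
  fixes \<phi> :: "'a::metric_space \<Rightarrow> 'b::metric_space"
  assumes "compact A" "continuous_on A \<phi>" "uncountable (\<phi> ` A)" "e > 0"
  shows "separated_split \<phi> A e (fst (cantor_split \<phi> A e)) (snd (cantor_split \<phi> A e))"
proof -
  obtain A0 A1 where "separated_split \<phi> A e A0 A1" using separated_split_exists[OF assms] by blast
  then have "\<exists>p. separated_split \<phi> A e (fst p) (snd p)" by (metis fst_conv snd_conv)
  then show ?thesis unfolding cantor_split_def by (rule someI_ex)
qed

(* A node is addressed by its list of choices, the most recent one first: b # s is a child of s. *)
primrec cantor_tree :: "('a::metric_space \<Rightarrow> 'b::metric_space) \<Rightarrow> 'a set \<Rightarrow> bool list \<Rightarrow> 'a set" where
  "cantor_tree \<phi> K [] = K"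
| "cantor_tree \<phi> K (b # s) =
    (if b then snd else fst) (cantor_split \<phi> (cantor_tree \<phi> K s) (inverse (real (Suc (length s)))))"

definition cantor_tree_limit :: "('a::metric_space \<Rightarrow> 'b::metric_space) \<Rightarrow> 'a set \<Rightarrow> 'a set" where
  "cantor_tree_limit \<phi> K = (\<Inter>n. \<Union>s\<in>{s. length s = n}. cantor_tree \<phi> K s)"

primrec branch :: "(nat \<Rightarrow> bool) \<Rightarrow> nat \<Rightarrow> bool list" where
  "branch a 0 = []"
| "branch a (Suc n) = a n # branch a n"

lemma length_branch [simp]: "length (branch a n) = n"
  by (induction n) auto

context
  fixes \<phi> :: "'a::metric_space \<Rightarrow> 'b::metric_space" and K :: "'a set"
  assumes K: "compact K" "continuous_on K \<phi>" "uncountable (\<phi> ` K)"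
begin

lemma cantor_tree_compact_uncountable:
  "compact (cantor_tree \<phi> K s) \<and> uncountable (\<phi> ` cantor_tree \<phi> K s) \<and> cantor_tree \<phi> K s \<subseteq> K"
proof (induction s)
  case Nil
  then show ?case using K by simp
next
  case (Cons b s)
  let ?A = "cantor_tree \<phi> K s" and ?e = "inverse (real (Suc (length s)))"
  have "continuous_on ?A \<phi>" using K(2) Cons.IH continuous_on_subset by blast
  then have "separated_split \<phi> ?A ?e (fst (cantor_split \<phi> ?A ?e)) (snd (cantor_split \<phi> ?A ?e))"
    using Cons.IH by (intro separated_split_cantor_split) auto
  then show ?case using Cons.IH unfolding separated_split_def by auto
qed

lemma cantor_tree_separated_split:
  "separated_split \<phi> (cantor_tree \<phi> K s) (inverse (real (Suc (length s))))
     (cantor_tree \<phi> K (False # s)) (cantor_tree \<phi> K (True # s))"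
proof -
  let ?A = "cantor_tree \<phi> K s" and ?e = "inverse (real (Suc (length s)))"
  have A: "compact ?A" "uncountable (\<phi> ` ?A)" "?A \<subseteq> K" using cantor_tree_compact_uncountable[of s] by auto
  have "separated_split \<phi> ?A ?e (fst (cantor_split \<phi> ?A ?e)) (snd (cantor_split \<phi> ?A ?e))"
    using continuous_on_subset[OF K(2) A(3)] by (intro separated_split_cantor_split A(1,2)) auto
  then show ?thesis by (simp only: cantor_tree.simps if_True if_False)
qed

lemma cantor_tree_Cons_subset: "cantor_tree \<phi> K (b # s) \<subseteq> cantor_tree \<phi> K s"
  using cantor_tree_separated_split[of s] unfolding separated_split_def by (cases b) auto

lemma cantor_tree_append_subset: "cantor_tree \<phi> K (p @ s) \<subseteq> cantor_tree \<phi> K s"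
proof (induction p)
  case (Cons b p)
  then show ?case by (metis append_Cons cantor_tree_Cons_subset order_trans)
qed simp

lemma cantor_tree_Cons_dist_le:
  assumes "x \<in> cantor_tree \<phi> K (b # s)" "y \<in> cantor_tree \<phi> K (b # s)"
  shows "dist x y \<le> 2 * inverse (real (Suc (length s)))"
proof -
  obtain c where "cantor_tree \<phi> K (b # s) \<subseteq> cball c (inverse (real (Suc (length s))))"
    using cantor_tree_separated_split[of s] unfolding separated_split_def by (cases b) auto
  then have "dist c x \<le> inverse (real (Suc (length s)))" "dist c y \<le> inverse (real (Suc (length s)))"
    using assms by (meson mem_cball subsetD)+
  then show ?thesis using dist_triangle3[of x y c] by linarith
qed

lemma cantor_tree_fine:
  assumes "d > 0"
  shows "\<exists>n. \<forall>s x y. length s = n \<longrightarrow> x \<in> cantor_tree \<phi> K s \<longrightarrow> y \<in> cantor_tree \<phi> K s \<longrightarrow> dist x y < d"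
proof -
  have "d / 2 > 0" using assms by simp
  then obtain m where m: "inverse (real (Suc m)) < d / 2" using reals_Archimedean by blast
  have "dist x y < d" if s: "length s = Suc m" "x \<in> cantor_tree \<phi> K s" "y \<in> cantor_tree \<phi> K s" for s x y
  proof -
    obtain b t where "s = b # t" "length t = m" using s(1) by (cases s) auto
    then show ?thesis using s(2,3) m cantor_tree_Cons_dist_le[of x b t y] by simp
  qed
  then show ?thesis by blast
qed

lemma cantor_tree_image_disjoint:
  "length s = length t \<Longrightarrow> s \<noteq> t \<Longrightarrow> \<phi> ` cantor_tree \<phi> K s \<inter> \<phi> ` cantor_tree \<phi> K t = {}"
proof (induction s arbitrary: t)
  case Nil
  then show ?case by simp
next
  case (Cons b s)
  then obtain c t' where t: "t = c # t'" "length s = length t'" by (cases t) auto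
  show ?case
  proof (cases "s = t'")
    case True
    then have "b \<noteq> c" using Cons.prems t by simp
    then show ?thesis
      using cantor_tree_separated_split[of s] True t unfolding separated_split_def
      by (cases b) (auto simp: Int_commute)
  next
    case False
    then show ?thesis
      using Cons.IH[OF t(2)] cantor_tree_Cons_subset[of b s] cantor_tree_Cons_subset[of c t'] t(1)
      by blast
  qed
qed

lemma cantor_tree_limit_level:
  "x \<in> cantor_tree_limit \<phi> K \<Longrightarrow> \<exists>s. length s = n \<and> x \<in> cantor_tree \<phi> K s"
  unfolding cantor_tree_limit_def by blast

lemma cantor_tree_limit_meets: "\<exists>x \<in> cantor_tree_limit \<phi> K. x \<in> cantor_tree \<phi> K s"
proof -
  have "\<exists>x. \<forall>m. x \<in> cantor_tree \<phi> K (replicate m False @ s)"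
  proof (rule compact_decseq_Inter_nonempty)
    show "compact (cantor_tree \<phi> K (replicate m False @ s))" for m
      using cantor_tree_compact_uncountable by blast
    show "cantor_tree \<phi> K (replicate m False @ s) \<noteq> {}" for m
      using cantor_tree_compact_uncountable by (metis countable_empty image_empty)
    show "cantor_tree \<phi> K (replicate (Suc m) False @ s) \<subseteq> cantor_tree \<phi> K (replicate m False @ s)" for m
      by (metis append_Cons replicate_Suc cantor_tree_Cons_subset)
  qed
  then obtain x where x: "\<And>m. x \<in> cantor_tree \<phi> K (replicate m False @ s)" by blast
  have "\<exists>t. length t = n \<and> x \<in> cantor_tree \<phi> K t" for n
  proof (cases "length s \<le> n")
    case True
    then show ?thesis using x[of "n - length s"] by (intro exI[of _ "replicate (n - length s) False @ s"]) simp
  next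
    case False
    let ?t = "drop (length s - n) s"
    have "cantor_tree \<phi> K s \<subseteq> cantor_tree \<phi> K ?t"
      using cantor_tree_append_subset[of "take (length s - n) s" ?t] by simp
    then show ?thesis using x[of 0] False by (intro exI[of _ ?t]) auto
  qed
  then have "x \<in> cantor_tree_limit \<phi> K" unfolding cantor_tree_limit_def by blast
  then show ?thesis using x[of 0] by auto
qed

lemma cantor_tree_limit_subset: "cantor_tree_limit \<phi> K \<subseteq> K"
  using cantor_tree_limit_level[of _ 0] by fastforce

lemma compact_cantor_tree_limit: "compact (cantor_tree_limit \<phi> K)"
proof -
  have "closed (cantor_tree \<phi> K s)" for s using cantor_tree_compact_uncountable compact_imp_closed by blast
  then have "closed (cantor_tree_limit \<phi> K)"
    unfolding cantor_tree_limit_def by (intro closed_INT ballI closed_UN finite_bool_lists_length)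
  then have "compact (K \<inter> cantor_tree_limit \<phi> K)" by (rule compact_Int_closed[OF K(1)])
  then show ?thesis by (simp add: Int_absorb1[OF cantor_tree_limit_subset])
qed

lemma cantor_tree_limit_separate:
  assumes "x \<in> cantor_tree_limit \<phi> K" "y \<in> cantor_tree_limit \<phi> K" "x \<noteq> y"
  obtains s t where "length s = length t" "s \<noteq> t" "x \<in> cantor_tree \<phi> K s" "y \<in> cantor_tree \<phi> K t"
proof -
  have "dist x y > 0" using assms(3) by simp
  then obtain n where n: "\<forall>s u v. length s = n \<longrightarrow> u \<in> cantor_tree \<phi> K s \<longrightarrow> v \<in> cantor_tree \<phi> K s \<longrightarrow> dist u v < dist x y"
    using cantor_tree_fine[of "dist x y"] by blast
  obtain s t where "length s = n" "x \<in> cantor_tree \<phi> K s" "length t = n" "y \<in> cantor_tree \<phi> K t"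
    using cantor_tree_limit_level assms(1,2) by metis
  moreover have "s \<noteq> t" using n calculation by (metis order.irrefl)
  ultimately show ?thesis using that[of s t] by simp
qed

lemma inj_on_cantor_tree_limit: "inj_on \<phi> (cantor_tree_limit \<phi> K)"
proof (rule inj_onI, rule ccontr)
  fix x y assume xy: "x \<in> cantor_tree_limit \<phi> K" "y \<in> cantor_tree_limit \<phi> K" "\<phi> x = \<phi> y" "x \<noteq> y"
  obtain s t where "length s = length t" "s \<noteq> t" "x \<in> cantor_tree \<phi> K s" "y \<in> cantor_tree \<phi> K t"
    by (rule cantor_tree_limit_separate[OF xy(1,2,4)])
  then show False using cantor_tree_image_disjoint xy(3) by blast
qed

lemma cantor_tree_limit_perfect:
  assumes x: "x \<in> cantor_tree_limit \<phi> K"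
  shows "x islimpt cantor_tree_limit \<phi> K"
  unfolding islimpt_approachable
proof (intro allI impI)
  fix e :: real assume "e > 0"
  then obtain n where n: "\<forall>s u v. length s = n \<longrightarrow> u \<in> cantor_tree \<phi> K s \<longrightarrow> v \<in> cantor_tree \<phi> K s \<longrightarrow> dist u v < e"
    using cantor_tree_fine[of e] by blast
  obtain s where s: "length s = n" "x \<in> cantor_tree \<phi> K s" using cantor_tree_limit_level[OF x] by blast
  obtain y0 y1 where y: "y0 \<in> cantor_tree_limit \<phi> K" "y0 \<in> cantor_tree \<phi> K (False # s)"
      "y1 \<in> cantor_tree_limit \<phi> K" "y1 \<in> cantor_tree \<phi> K (True # s)"
    using cantor_tree_limit_meets by blast
  have "y0 \<noteq> y1" using cantor_tree_image_disjoint[of "False # s" "True # s"] y(2,4) by auto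
  then obtain y where "y \<in> {y0, y1}" "y \<noteq> x" by blast
  moreover have "y \<in> cantor_tree \<phi> K s" if "y \<in> {y0, y1}" for y
    using that y(2,4) cantor_tree_Cons_subset by blast
  ultimately show "\<exists>y\<in>cantor_tree_limit \<phi> K. y \<noteq> x \<and> dist y x < e"
    using y(1,3) n s by blast
qed

lemma totally_disconnected_cantor_tree_limit: "totally_disconnected_set (cantor_tree_limit \<phi> K)"
  unfolding totally_disconnected_set_def
proof (intro allI impI ballI)
  fix C x y assume C: "C \<subseteq> cantor_tree_limit \<phi> K \<and> connected C" and xy: "x \<in> C" "y \<in> C"
  show "x = y"
  proof (rule ccontr)
    assume "x \<noteq> y"
    then obtain s t where st: "length s = length t" "s \<noteq> t" "x \<in> cantor_tree \<phi> K s" "y \<in> cantor_tree \<phi> K t"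
      using cantor_tree_limit_separate C xy by blast
    define E where "E = (\<Union>u\<in>{u. length u = length s \<and> u \<noteq> s}. cantor_tree \<phi> K u)"
    have closed: "closed (cantor_tree \<phi> K u)" for u
      using cantor_tree_compact_uncountable compact_imp_closed by blast
    have "closed E"
      unfolding E_def using finite_bool_lists_length[of "length s"] closed
      by (intro closed_UN) (auto elim: rev_finite_subset)
    moreover have "cantor_tree \<phi> K s \<inter> E \<inter> C = {}"
      unfolding E_def using cantor_tree_image_disjoint by blast
    moreover have "C \<subseteq> cantor_tree \<phi> K s \<union> E"
      unfolding E_def using C cantor_tree_limit_level by blast
    ultimately have "cantor_tree \<phi> K s \<inter> C = {} \<or> E \<inter> C = {}"
      using connected_closedD[OF _ _ _ closed] C by blast
    moreover have "y \<in> E" unfolding E_def using st by auto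
    ultimately show False using st(3) xy by blast
  qed
qed

lemma uncountable_cantor_tree_limit: "uncountable (cantor_tree_limit \<phi> K)"
proof -
  have ex: "\<exists>z. \<forall>n. z \<in> cantor_tree \<phi> K (branch a n)" for a
  proof (rule compact_decseq_Inter_nonempty)
    show "compact (cantor_tree \<phi> K (branch a n))" for n
      using cantor_tree_compact_uncountable by blast
    show "cantor_tree \<phi> K (branch a n) \<noteq> {}" for n
      using cantor_tree_compact_uncountable by (metis countable_empty image_empty)
    show "cantor_tree \<phi> K (branch a (Suc n)) \<subseteq> cantor_tree \<phi> K (branch a n)" for n
      unfolding branch.simps by (rule cantor_tree_Cons_subset)
  qed
  define h where "h a = (SOME z. \<forall>n. z \<in> cantor_tree \<phi> K (branch a n))" for a
  have h: "h a \<in> cantor_tree \<phi> K (branch a n)" for a n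
    using someI_ex[OF ex[of a]] unfolding h_def by blast
  have "inj h"
  proof (rule injI, rule ccontr)
    fix a a' assume "h a = h a'" "a \<noteq> a'"
    then obtain i where "a i \<noteq> a' i" by (auto simp: fun_eq_iff)
    then have "branch a (Suc i) \<noteq> branch a' (Suc i)" by simp
    then have disj: "\<phi> ` cantor_tree \<phi> K (branch a (Suc i)) \<inter> \<phi> ` cantor_tree \<phi> K (branch a' (Suc i)) = {}"
      by (intro cantor_tree_image_disjoint) simp
    have "h a \<in> cantor_tree \<phi> K (branch a (Suc i))" "h a \<in> cantor_tree \<phi> K (branch a' (Suc i))"
      using h[of a "Suc i"] h[of a' "Suc i"] \<open>h a = h a'\<close> by simp_all
    then have "\<phi> (h a) \<in> \<phi> ` cantor_tree \<phi> K (branch a (Suc i)) \<inter> \<phi> ` cantor_tree \<phi> K (branch a' (Suc i))"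
      by blast
    then show False using disj by (metis empty_iff)
  qed
  then have "uncountable (range h)"
    using uncountable_UNIV_nat_bool_fun countable_image_inj_on by blast
  moreover have "range h \<subseteq> cantor_tree_limit \<phi> K"
    unfolding cantor_tree_limit_def using h length_branch by blast
  ultimately show ?thesis using countable_subset by blast
qed

lemma cantor_set_cantor_tree_limit: "cantor_set (cantor_tree_limit \<phi> K)"
  unfolding cantor_set_def
  using cantor_tree_limit_meets[of "[]"] compact_cantor_tree_limit cantor_tree_limit_perfect
    totally_disconnected_cantor_tree_limit by blast

end

lemma cantor_subset_inj_on:
  fixes \<phi> :: "'a::metric_space \<Rightarrow> 'b::metric_space"
  assumes "compact K" "continuous_on K \<phi>" "uncountable (\<phi> ` K)"
  obtains Q where "cantor_set Q" "Q \<subseteq> K" "inj_on \<phi> Q" "uncountable Q"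
  using that[OF cantor_set_cantor_tree_limit[OF assms] cantor_tree_limit_subset[OF assms]
      inj_on_cantor_tree_limit[OF assms] uncountable_cantor_tree_limit[OF assms]] .

lemma cantor_subset_inj_on_preimage:
  fixes g :: "'a::metric_space \<Rightarrow> 'b::metric_space"
  assumes W: "compact W" and P: "compact P" "uncountable P"
    and g: "continuous_on W g" "continuous_on P g" "inj_on g P" "g ` P \<subseteq> g ` W"
  obtains Q where "cantor_set Q" "Q \<subseteq> W" "inj_on g Q" "uncountable Q" "g ` Q \<subseteq> g ` P"
proof -
  let ?K = "W \<inter> g -` g ` P"
  have "closed ?K"
    using compact_continuous_image[OF g(2) P(1)] W g(1)
    by (intro continuous_closed_preimage compact_imp_closed)
  then have "compact (W \<inter> ?K)" by (rule compact_Int_closed[OF W])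
  then have K: "compact ?K" by (simp only: Int_left_absorb)
  have cont: "continuous_on ?K g" using g(1) by (rule continuous_on_subset) (rule Int_lower1)
  have "g ` P \<subseteq> g ` ?K"
  proof
    fix y assume y: "y \<in> g ` P"
    then obtain w where w: "w \<in> W" "y = g w" using g(4) by blast
    then have "w \<in> ?K" using y by simp
    then show "y \<in> g ` ?K" using w(2) by (rule rev_image_eqI)
  qed
  moreover have "uncountable (g ` P)" using countable_image_inj_on[OF _ g(3)] P(2) by blast
  ultimately have "uncountable (g ` ?K)" using countable_subset by blast
  then obtain Q where Q: "cantor_set Q" "Q \<subseteq> ?K" "inj_on g Q" "uncountable Q"
    by (rule cantor_subset_inj_on[OF K cont])
  have "Q \<subseteq> W" "g ` Q \<subseteq> g ` P" using Q(2) by auto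
  then show ?thesis using that[OF Q(1) _ Q(3,4)] by blast
qed

lemma compact_uncountable_disjoint_family:
  fixes S :: "'a::metric_space set"
  assumes S: "compact S" "uncountable S"
  obtains P :: "nat \<Rightarrow> 'a set" where
    "\<And>k. compact (P k)" "\<And>k. P k \<subseteq> S" "\<And>k. uncountable (P k)" "disjoint_family P"
proof
  have id: "continuous_on S id" "uncountable (id ` S)" using S(2) by (simp_all add: continuous_on_id)
  let ?T = "cantor_tree (id :: 'a \<Rightarrow> 'a) S"
  (* The nodes False # True^k leave the all-True branch at pairwise different depths. *)
  define P where "P k = ?T (False # replicate k True)" for k
  show "compact (P k)" "P k \<subseteq> S" "uncountable (P k)" for k
    using cantor_tree_compact_uncountable[OF S(1) id, of "False # replicate k True"] unfolding P_def by auto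
  have "P k \<inter> P j = {}" if "j < k" for j k
  proof -
    have "False # replicate k True = (False # replicate (k - Suc j) True) @ (True # replicate j True)"
      using that by (simp flip: replicate_add replicate_Suc)
    then have "P k \<subseteq> ?T (True # replicate j True)"
      unfolding P_def by (metis cantor_tree_append_subset[OF S(1) id])
    moreover have "P j \<inter> ?T (True # replicate j True) = {}"
      using cantor_tree_image_disjoint[OF S(1) id, of "False # replicate j True" "True # replicate j True"]
      unfolding P_def by simp
    ultimately show ?thesis by blast
  qed
  then show "disjoint_family P"
    unfolding disjoint_family_on_def by (metis Int_commute linorder_neqE_nat)
qed

section \<open>Construction of the scrambled set\<close>

lemma compact_finite_nets:
  fixes X :: "'a::metric_space set"
  assumes "compact X"
  obtains F :: "nat \<Rightarrow> 'a set" where "\<And>m. finite (F m)" "\<And>m. F m \<subseteq> X"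
    "\<And>m. X \<subseteq> (\<Union>c\<in>F m. ball c (inverse (real (Suc m))))"
proof -
  have "\<forall>m. \<exists>F. finite F \<and> F \<subseteq> X \<and> X \<subseteq> (\<Union>c\<in>F. ball c (inverse (real (Suc m))))"
  proof
    fix m
    have "X \<subseteq> (\<Union>c\<in>X. ball c (inverse (real (Suc m))))" by force
    then obtain F where "F \<subseteq> X" "finite F" "X \<subseteq> (\<Union>c\<in>F. ball c (inverse (real (Suc m))))"
      using compactE_image[OF assms, of X "\<lambda>c. ball c (inverse (real (Suc m)))"] by auto
    then show "\<exists>F. finite F \<and> F \<subseteq> X \<and> X \<subseteq> (\<Union>c\<in>F. ball c (inverse (real (Suc m))))"
      by blast
  qed
  then have "\<exists>F. \<forall>m. finite (F m) \<and> F m \<subseteq> X \<and> X \<subseteq> (\<Union>c\<in>F m. ball c (inverse (real (Suc m))))"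
    by (rule choice)
  then obtain F where "\<forall>m. finite (F m) \<and> F m \<subseteq> X \<and> X \<subseteq> (\<Union>c\<in>F m. ball c (inverse (real (Suc m))))"
    by blast
  then have "\<And>m. finite (F m)" "\<And>m. F m \<subseteq> X" "\<And>m. X \<subseteq> (\<Union>c\<in>F m. ball c (inverse (real (Suc m))))"
    by blast+
  then show ?thesis by (rule that)
qed

lemma countable_compact_pi_base:
  fixes X :: "'a::metric_space set"
  assumes X: "compact X" "X \<noteq> {}"
  obtains W :: "nat \<Rightarrow> 'a set" where "\<And>k. compact (W k)" "\<And>k. W k \<subseteq> X"
    "\<And>k. \<exists>V. openin (top_of_set X) V \<and> V \<noteq> {} \<and> V \<subseteq> W k"
    "\<And>U. openin (top_of_set X) U \<Longrightarrow> U \<noteq> {} \<Longrightarrow> \<exists>k. W k \<subseteq> U"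
proof -
  obtain F :: "nat \<Rightarrow> 'a set" where F: "\<And>m. finite (F m)" "\<And>m. F m \<subseteq> X"
    "\<And>m. X \<subseteq> (\<Union>c\<in>F m. ball c (inverse (real (Suc m))))"
    by (fact compact_finite_nets[OF X(1)])
  define D where "D = (SIGMA m:UNIV. F m)"
  have "D \<noteq> {}" unfolding D_def using F(3)[of 0] X(2) by auto
  moreover have "countable D" unfolding D_def using F(1) by (intro countable_SIGMA) (auto intro: countable_finite)
  ultimately have D: "range (from_nat_into D) = D" by (rule range_from_nat_into)
  define W where "W k = X \<inter> cball (snd (from_nat_into D k)) (inverse (real (Suc (fst (from_nat_into D k)))))" for k
  show ?thesis
  proof
    show "compact (W k)" "W k \<subseteq> X" for k
      unfolding W_def using X(1) by (auto intro: compact_Int_closed)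
    show "\<exists>V. openin (top_of_set X) V \<and> V \<noteq> {} \<and> V \<subseteq> W k" for k
    proof -
      obtain m c where mc: "from_nat_into D k = (m, c)" "c \<in> F m"
        using D unfolding D_def by (metis SigmaE rangeI)
      then have "c \<in> X" using F(2) by blast
      then show ?thesis unfolding W_def mc(1)
        by (intro exI[of _ "X \<inter> ball c (inverse (real (Suc m)))"]) (auto simp: openin_open_Int)
    qed
    show "\<exists>k. W k \<subseteq> U" if U: "openin (top_of_set X) U" "U \<noteq> {}" for U
    proof -
      obtain x where x: "x \<in> U" using U(2) by blast
      then obtain e where e: "e > 0" "X \<inter> ball x e \<subseteq> U"
        using U(1) unfolding openin_contains_ball by (metis Int_commute)
      have "e / 2 > 0" using e(1) by simp
      then obtain m where m: "inverse (real (Suc m)) < e / 2" using reals_Archimedean by blast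
      obtain c where c: "c \<in> F m" "dist c x < inverse (real (Suc m))"
        using F(3) x U(1) openin_imp_subset by fastforce
      have "(m, c) \<in> range (from_nat_into D)" using D c(1) unfolding D_def by simp
      then obtain k where k: "from_nat_into D k = (m, c)" by (metis rangeE)
      have "cball c (inverse (real (Suc m))) \<subseteq> ball x e"
      proof
        fix z assume "z \<in> cball c (inverse (real (Suc m)))"
        then have "dist c z \<le> inverse (real (Suc m))" by simp
        then have "dist x z < e" using c(2) m dist_triangle[of x z c] by (simp add: dist_commute)
        then show "z \<in> ball x e" by simp
      qed
      then have "W k \<subseteq> U" using e(2) unfolding W_def k by auto
      then show ?thesis by blast
    qed
  qed
qed

lemma funpow_image_subset: "f ` X \<subseteq> X \<Longrightarrow> (f ^^ n) ` X \<subseteq> X"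
  by (induction n) (auto simp: image_subset_iff)

lemma continuous_on_funpow:
  assumes "continuous_on X f" "f ` X \<subseteq> X"
  shows "continuous_on X (f ^^ n)"
proof (induction n)
  case (Suc n)
  have "continuous_on ((f ^^ n) ` X) f"
    using assms(1) funpow_image_subset[OF assms(2)] by (rule continuous_on_subset)
  then show ?case using continuous_on_compose[OF Suc] by simp
qed (simp add: continuous_on_id)

lemma synd_scrambled_c_dense_exists:
  fixes W :: "nat \<Rightarrow> 'a::metric_space set" and n :: "nat \<Rightarrow> nat"
  assumes S: "synd_scrambled X f S" "uncountable S"
    and W: "\<And>k. W k \<subseteq> X" "\<And>U. openin (top_of_set X) U \<Longrightarrow> U \<noteq> {} \<Longrightarrow> \<exists>k. W k \<subseteq> U"
    and n: "\<And>k. (f ^^ n k) ` S \<subseteq> (f ^^ n k) ` W k"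
  shows "\<exists>T. c_dense X T \<and> synd_scrambled X f T \<and>
    (\<forall>\<epsilon>. synd_eps_scrambled X f \<epsilon> S \<longrightarrow> synd_eps_scrambled X f \<epsilon> T)"
proof -
  obtain P :: "nat \<Rightarrow> 'a set" where P: "\<And>k. P k \<subseteq> S" "\<And>k. uncountable (P k)" "disjoint_family P"
    by (fact uncountable_disjoint_family[OF S(2)])
  have "\<forall>k. \<exists>Q. Q \<subseteq> W k \<and> inj_on (f ^^ n k) Q \<and> uncountable Q \<and> (f ^^ n k) ` Q = (f ^^ n k) ` P k"
  proof
    fix k
    have "inj_on (f ^^ n k) (P k)"
      using synd_scrambled_inj_on_funpow[OF S(1)] P(1) by (rule inj_on_subset)
    moreover have "(f ^^ n k) ` P k \<subseteq> (f ^^ n k) ` W k" using n[of k] P(1)[of k] by blast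
    ultimately obtain Q where "Q \<subseteq> W k" "inj_on (f ^^ n k) Q" "uncountable Q" "(f ^^ n k) ` Q = (f ^^ n k) ` P k"
      by (rule uncountable_section[OF P(2)])
    then show "\<exists>Q. Q \<subseteq> W k \<and> inj_on (f ^^ n k) Q \<and> uncountable Q \<and> (f ^^ n k) ` Q = (f ^^ n k) ` P k"
      by blast
  qed
  then have "\<exists>Q. \<forall>k. Q k \<subseteq> W k \<and> inj_on (f ^^ n k) (Q k) \<and> uncountable (Q k) \<and>
      (f ^^ n k) ` Q k = (f ^^ n k) ` P k"
    by (rule choice)
  then obtain Q where "\<forall>k. Q k \<subseteq> W k \<and> inj_on (f ^^ n k) (Q k) \<and> uncountable (Q k) \<and>
      (f ^^ n k) ` Q k = (f ^^ n k) ` P k"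
    by blast
  then have Q0: "\<And>k. Q k \<subseteq> W k" "\<And>k. uncountable (Q k)" "\<And>k. inj_on (f ^^ n k) (Q k)"
      "\<And>k. (f ^^ n k) ` Q k \<subseteq> (f ^^ n k) ` P k"
    by blast+
  have QX: "Q k \<subseteq> X" for k using Q0(1) W(1) by blast
  have "\<exists>k. Q k \<subseteq> U" if "openin (top_of_set X) U" "U \<noteq> {}" for U
    using W(2)[OF that] Q0(1) by blast
  then show ?thesis
    using c_dense_synd_scrambled_Union[OF S(1) P(1,3) QX Q0(2,3,4)] by blast
qed

lemma synd_scrambled_mycielski_exists:
  fixes W :: "nat \<Rightarrow> 'a::metric_space set" and n :: "nat \<Rightarrow> nat"
  assumes f: "continuous_on X f" "f ` X \<subseteq> X"
    and S: "synd_scrambled X f S" "uncountable S" "compact S"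
    and W: "\<And>k. compact (W k)" "\<And>k. W k \<subseteq> X"
      "\<And>U. openin (top_of_set X) U \<Longrightarrow> U \<noteq> {} \<Longrightarrow> \<exists>k. W k \<subseteq> U"
    and n: "\<And>k. (f ^^ n k) ` S \<subseteq> (f ^^ n k) ` W k"
  shows "\<exists>T. c_dense X T \<and> synd_scrambled X f T \<and> mycielski_set T \<and>
    (\<forall>\<epsilon>. synd_eps_scrambled X f \<epsilon> S \<longrightarrow> synd_eps_scrambled X f \<epsilon> T)"
proof -
  obtain P :: "nat \<Rightarrow> 'a set"
    where P: "\<And>k. compact (P k)" "\<And>k. P k \<subseteq> S" "\<And>k. uncountable (P k)" "disjoint_family P"
    by (fact compact_uncountable_disjoint_family[OF S(3,2)])
  have SX: "S \<subseteq> X" using S(1) unfolding synd_scrambled_def by blast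
  have "\<forall>k. \<exists>Q. cantor_set Q \<and> Q \<subseteq> W k \<and> inj_on (f ^^ n k) Q \<and> uncountable Q \<and>
      (f ^^ n k) ` Q \<subseteq> (f ^^ n k) ` P k"
  proof
    fix k
    have "continuous_on (W k) (f ^^ n k)" "continuous_on (P k) (f ^^ n k)"
      using continuous_on_funpow[OF f] W(2) P(2) SX by (meson continuous_on_subset order_trans)+
    moreover have "inj_on (f ^^ n k) (P k)"
      using synd_scrambled_inj_on_funpow[OF S(1)] P(2) by (rule inj_on_subset)
    moreover have "(f ^^ n k) ` P k \<subseteq> (f ^^ n k) ` W k" using n[of k] P(2)[of k] by blast
    ultimately obtain Q where "cantor_set Q" "Q \<subseteq> W k" "inj_on (f ^^ n k) Q" "uncountable Q"
        "(f ^^ n k) ` Q \<subseteq> (f ^^ n k) ` P k"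
      by (rule cantor_subset_inj_on_preimage[OF W(1) P(1,3)])
    then show "\<exists>Q. cantor_set Q \<and> Q \<subseteq> W k \<and> inj_on (f ^^ n k) Q \<and> uncountable Q \<and>
        (f ^^ n k) ` Q \<subseteq> (f ^^ n k) ` P k"
      by blast
  qed
  then have "\<exists>Q. \<forall>k. cantor_set (Q k) \<and> Q k \<subseteq> W k \<and> inj_on (f ^^ n k) (Q k) \<and> uncountable (Q k) \<and>
      (f ^^ n k) ` Q k \<subseteq> (f ^^ n k) ` P k"
    by (rule choice)
  then obtain Q where "\<forall>k. cantor_set (Q k) \<and> Q k \<subseteq> W k \<and> inj_on (f ^^ n k) (Q k) \<and>
      uncountable (Q k) \<and> (f ^^ n k) ` Q k \<subseteq> (f ^^ n k) ` P k"
    by blast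
  then have Q0: "\<And>k. Q k \<subseteq> W k" "\<And>k. uncountable (Q k)" "\<And>k. inj_on (f ^^ n k) (Q k)"
      "\<And>k. (f ^^ n k) ` Q k \<subseteq> (f ^^ n k) ` P k" and cantor: "\<And>k. cantor_set (Q k)"
    by blast+
  have QX: "Q k \<subseteq> X" for k using Q0(1) W(2) by blast
  have "\<exists>k. Q k \<subseteq> U" if "openin (top_of_set X) U" "U \<noteq> {}" for U
    using W(3)[OF that] Q0(1) by blast
  then have "c_dense X (\<Union>k. Q k) \<and> synd_scrambled X f (\<Union>k. Q k) \<and>
    (\<forall>\<epsilon>. synd_eps_scrambled X f \<epsilon> S \<longrightarrow> synd_eps_scrambled X f \<epsilon> (\<Union>k. Q k))"
    by (rule c_dense_synd_scrambled_Union[OF S(1) P(2,4) QX Q0(2,3,4)])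
  moreover have "mycielski_set (\<Union>k. Q k)"
    unfolding mycielski_set_def using cantor by (intro exI[of _ "range Q"]) auto
  ultimately show ?thesis by blast
qed

theorem lemma3p10:
  fixes X :: "'a::metric_space set" and f :: "'a \<Rightarrow> 'a" and S :: "'a set"
  assumes "compact X"
    and "continuous_on X f" and "f ` X \<subseteq> X"
    and "uncountable S" and "synd_scrambled X f S"
    and "\<forall>U. openin (top_of_set X) U \<and> U \<noteq> {} \<longrightarrow> (\<exists>n. (f ^^ n) ` S \<subseteq> (f ^^ n) ` U)"
  shows "\<exists>T. c_dense X T \<and> synd_scrambled X f T
           \<and> (cantor_set S \<longrightarrow> mycielski_set T \<and> X \<subseteq> closure T)
           \<and> (\<forall>\<epsilon>. synd_eps_scrambled X f \<epsilon> S \<longrightarrow> synd_eps_scrambled X f \<epsilon> T)"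
proof -
  have "X \<noteq> {}" using assms(4,5) unfolding synd_scrambled_def by auto
  obtain W :: "nat \<Rightarrow> 'a set" where W: "\<And>k. compact (W k)" "\<And>k. W k \<subseteq> X"
    "\<And>k. \<exists>V. openin (top_of_set X) V \<and> V \<noteq> {} \<and> V \<subseteq> W k"
    "\<And>U. openin (top_of_set X) U \<Longrightarrow> U \<noteq> {} \<Longrightarrow> \<exists>k. W k \<subseteq> U"
    by (fact countable_compact_pi_base[OF assms(1) \<open>X \<noteq> {}\<close>])
  have "\<forall>k. \<exists>m. (f ^^ m) ` S \<subseteq> (f ^^ m) ` W k"
  proof
    fix k
    obtain V where "openin (top_of_set X) V" "V \<noteq> {}" "V \<subseteq> W k" using W(3) by blast
    then show "\<exists>m. (f ^^ m) ` S \<subseteq> (f ^^ m) ` W k" using assms(6) by (meson image_mono order_trans)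
  qed
  then have "\<exists>n. \<forall>k. (f ^^ n k) ` S \<subseteq> (f ^^ n k) ` W k" by (rule choice)
  then obtain n where n: "\<And>k. (f ^^ n k) ` S \<subseteq> (f ^^ n k) ` W k" by blast
  show ?thesis
  proof (cases "cantor_set S")
    case True
    then obtain T where "c_dense X T" "synd_scrambled X f T" "mycielski_set T"
        "\<forall>\<epsilon>. synd_eps_scrambled X f \<epsilon> S \<longrightarrow> synd_eps_scrambled X f \<epsilon> T"
      using synd_scrambled_mycielski_exists[OF assms(2,3,5,4) _ W(1,2,4) n]
      unfolding cantor_set_def by blast
    then show ?thesis using c_dense_imp_subset_closure by blast
  next
    case False
    then show ?thesis
      using synd_scrambled_c_dense_exists[OF assms(5,4) W(2,4) n] by blast
  qed
qed

end
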